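(* Let $n,k,j,i$ be integers with $n\ge k\ge 1$, $0\le j<n$, $i\ge 1$. Let $f^*_{(n,k)\setminus(j),i}(q)$ be the sum of $q^{\mathrm{maj}(\tau)}$ over standard Young tableaux $\tau$ of skew shape $(n,k)\setminus(j)$ with exactly $i$ descents in which the entry $1$ lies in the top row. Then $$f^*_{(n,k)\setminus(j),i}(q) = q^{i^2}\left( \begin{bmatrix} n-j \\ i \end{bmatrix}_q \begin{bmatrix} k-1 \\ i-1 \end{bmatrix}_q - \begin{bmatrix} n \\ i-1 \end{bmatrix}_q \begin{bmatrix} k-j-1 \\ i \end{bmatrix}_q \right).$$
   Context: The skew shape $(n,k)\setminus(j)$ consists of a top row occupying columns $j+1,\dots,n$ and a bottom row occupying columns $1,\dots,k$. A standard Young tableau of this shape is a filling with $1,\dots,n+k-j$, each used once, increasing along rows left to right and down columns. It has a descent at $m$ if $m+1$ lies in a strictly lower row than $m$; $\mathrm{maj}$ is the sum of the descents. The $q$-binomial coefficient is $\begin{bmatrix} M \\ N \end{bmatrix}_q = \frac{(q)_M}{(q)_N(q)_{M-N}}$ with $(q)_m=(1-q)\cdots(1-q^m)$ when $0\le N\le M$ are integers, and $0$ otherwise. *)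

theory Defs
  imports "HOL-Computational_Algebra.Polynomial" "HOL-Computational_Algebra.Fraction_Field"
begin

text \<open>Cells of the skew shape (n,k) minus (j): row 0 is the top row (columns j+1..n),
  row 1 is the bottom row (columns 1..k). A cell is a pair (row, column).\<close>
definition skew_cells :: "nat \<Rightarrow> nat \<Rightarrow> nat \<Rightarrow> (nat \<times> nat) set" where
  "skew_cells n k j = {(0, c) | c. j < c \<and> c \<le> n} \<union> {(1, c) | c. 1 \<le> c \<and> c \<le> k}"

definition skew_syt :: "nat \<Rightarrow> nat \<Rightarrow> nat \<Rightarrow> ((nat \<times> nat) \<Rightarrow> nat) set" where
  "skew_syt n k j = {T.
     bij_betw T (skew_cells n k j) {1..n + k - j} \<and>
     (\<forall>x. x \<notin> skew_cells n k j \<longrightarrow> T x = 0) \<and>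
     (\<forall>r c c'. (r, c) \<in> skew_cells n k j \<and> (r, c') \<in> skew_cells n k j \<and> c < c'
                \<longrightarrow> T (r, c) < T (r, c')) \<and>
     (\<forall>c. (0, c) \<in> skew_cells n k j \<and> (1, c) \<in> skew_cells n k j \<longrightarrow> T (0, c) < T (1, c))}"

definition entry_row :: "nat \<Rightarrow> nat \<Rightarrow> nat \<Rightarrow> ((nat \<times> nat) \<Rightarrow> nat) \<Rightarrow> nat \<Rightarrow> nat" where
  "entry_row n k j T m = fst (THE x. x \<in> skew_cells n k j \<and> T x = m)"

definition descents :: "nat \<Rightarrow> nat \<Rightarrow> nat \<Rightarrow> ((nat \<times> nat) \<Rightarrow> nat) \<Rightarrow> nat set" where
  "descents n k j T = {m. 1 \<le> m \<and> m < n + k - j \<and>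
      entry_row n k j T m < entry_row n k j T (m + 1)}"

definition maj :: "nat \<Rightarrow> nat \<Rightarrow> nat \<Rightarrow> ((nat \<times> nat) \<Rightarrow> nat) \<Rightarrow> nat" where
  "maj n k j T = \<Sum>(descents n k j T)"

definition fstar :: "nat \<Rightarrow> nat \<Rightarrow> nat \<Rightarrow> nat \<Rightarrow> int poly" where
  "fstar n k j i = (\<Sum>T \<in> {T \<in> skew_syt n k j. card (descents n k j T) = i \<and> entry_row n k j T 1 = 0}.
       monom 1 (maj n k j T))"

definition rf :: "int poly \<Rightarrow> int poly fract" where
  "rf p = Fract p 1"

definition qpoch :: "nat \<Rightarrow> int poly" where
  "qpoch m = (\<Prod>i = 1..m. 1 - monom 1 i)"

definition qbinom :: "int \<Rightarrow> int \<Rightarrow> int poly fract" where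
  "qbinom M N = (if 0 \<le> N \<and> N \<le> M
     then rf (qpoch (nat M)) / (rf (qpoch (nat N)) * rf (qpoch (nat (M - N)))) else 0)"

end

theory Submission
  imports Defs
begin

text \<open>Recording, for \<open>m = 1, 2, \<dots>\<close>, the row of the entry \<open>m\<close> (0 for the top row, 1 for the
  bottom row) turns a standard tableau of shape \<open>(n,k)\<setminus>(j)\<close> bijectively into a word with \<open>n - j\<close>
  zeros and \<open>k\<close> ones in which every prefix contains at most \<open>j\<close> more ones than zeros. Descents of
  the tableau become ascents \<open>01\<close> of the word, and the entry 1 lies in the top row iff the word
  starts with 0. Removing the first letter gives recurrences for the generating functions of such
  ballot words by number of ascents and major index, and the q-Pascal rule shows that the
  q-binomial expressions satisfy the same recurrences and initial values.\<close>

section \<open>Gaussian binomial coefficients\<close>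

fun gauss_poly :: "nat \<Rightarrow> nat \<Rightarrow> int poly" where
  "gauss_poly 0 0 = 1"
| "gauss_poly 0 (Suc k) = 0"
| "gauss_poly (Suc m) 0 = 1"
| "gauss_poly (Suc m) (Suc k) = gauss_poly m k + monom 1 (Suc k) * gauss_poly m (Suc k)"

lemma gauss_poly_eq_0: "m < k \<Longrightarrow> gauss_poly m k = 0"
  by (induction m k rule: gauss_poly.induct) auto

lemma gauss_poly_0_right [simp]: "gauss_poly m 0 = 1"
  by (cases m) auto

lemma monom_1_mult: "monom (1::'a::comm_semiring_1) a * monom 1 b = monom 1 (a + b)"
  by (simp add: mult_monom)

lemma qpoch_Suc: "qpoch (Suc m) = qpoch m * (1 - monom 1 (Suc m))"
  by (simp add: qpoch_def)

lemma qpoch_0 [simp]: "qpoch 0 = 1"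
  by (simp add: qpoch_def)

lemma qpoch_nonzero: "qpoch m \<noteq> 0"
proof (induction m)
  case (Suc m)
  have "coeff (1 - monom (1::int) (Suc m)) 0 = 1" by simp
  then have "1 - monom (1::int) (Suc m) \<noteq> 0" by (metis coeff_0 zero_neq_one)
  with Suc show ?case by (simp add: qpoch_Suc)
qed simp

lemma gauss_poly_qpoch: "k \<le> m \<Longrightarrow> gauss_poly m k * qpoch k * qpoch (m - k) = qpoch m"
proof (induction m arbitrary: k)
  case (Suc m)
  show ?case
  proof (cases k)
    case (Suc l)
    with Suc.prems have "l \<le> m" by simp
    have tail: "monom 1 (Suc l) * gauss_poly m (Suc l) * qpoch (Suc l) * qpoch (m - l)
        = qpoch m * (monom 1 (Suc l) - monom 1 (Suc m))"
    proof (cases "l = m")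
      case False
      with \<open>l \<le> m\<close> have "Suc l \<le> m" by simp
      then have "m - l = Suc (m - Suc l)" by simp
      then have "monom 1 (Suc l) * gauss_poly m (Suc l) * qpoch (Suc l) * qpoch (m - l)
          = (gauss_poly m (Suc l) * qpoch (Suc l) * qpoch (m - Suc l))
            * (monom 1 (Suc l) * (1 - monom 1 (Suc (m - Suc l))))"
        by (simp add: qpoch_Suc algebra_simps)
      also have "monom 1 (Suc l) * (1 - monom 1 (Suc (m - Suc l))) = monom (1::int) (Suc l) - monom 1 (Suc m)"
        using \<open>Suc l \<le> m\<close> by (simp add: right_diff_distrib monom_1_mult)
      finally show ?thesis using Suc.IH[OF \<open>Suc l \<le> m\<close>] by simp
    qed (simp add: gauss_poly_eq_0)
    have "gauss_poly (Suc m) k * qpoch k * qpoch (Suc m - k)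
        = gauss_poly m l * qpoch l * qpoch (m - l) * (1 - monom 1 (Suc l))
          + monom 1 (Suc l) * gauss_poly m (Suc l) * qpoch (Suc l) * qpoch (m - l)"
      using Suc by (simp add: qpoch_Suc algebra_simps)
    also have "\<dots> = qpoch m * (1 - monom 1 (Suc m))"
      using Suc.IH[OF \<open>l \<le> m\<close>] tail by (simp add: algebra_simps)
    finally show ?thesis by (simp add: qpoch_Suc)
  qed simp
qed simp

definition gauss_binom :: "int \<Rightarrow> int \<Rightarrow> int poly" where
  "gauss_binom M N = (if 0 \<le> M \<and> 0 \<le> N then gauss_poly (nat M) (nat N) else 0)"

lemma gauss_binom_eq_0: "M < 0 \<or> N < 0 \<or> M < N \<Longrightarrow> gauss_binom M N = 0"
  by (auto simp: gauss_binom_def gauss_poly_eq_0 nat_less_eq_zless)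

lemma gauss_binom_0_right: "gauss_binom M 0 = (if 0 \<le> M then 1 else 0)"
  by (simp add: gauss_binom_def)

lemma gauss_binom_pascal:
  "gauss_binom M (int (Suc n)) =
     gauss_binom (M - 1) (int n) + monom 1 (Suc n) * gauss_binom (M - 1) (int (Suc n))"
proof (cases "1 \<le> M")
  case True
  then have "nat M = Suc (nat (M - 1))" "M - 1 = int (nat (M - 1))"
    by simp_all
  then show ?thesis
    by (simp add: gauss_binom_def del: of_nat_Suc)
qed (auto simp: gauss_binom_def gauss_poly_eq_0 nat_less_eq_zless)

lemma rf_mult: "rf (p * q) = rf p * rf q"
  by (simp add: rf_def)

lemma rf_diff: "rf (p - q) = rf p - rf q"
  by (simp add: rf_def)

lemma rf_eq_0_iff: "rf p = 0 \<longleftrightarrow> p = 0"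
  by (simp add: rf_def Zero_fract_def eq_fract)

lemma qbinom_eq_gauss_binom: "qbinom M N = rf (gauss_binom M N)"
proof (cases "0 \<le> N \<and> N \<le> M")
  case True
  then have "nat N \<le> nat M" "nat (M - N) = nat M - nat N" by (simp_all add: nat_mono nat_diff_distrib)
  then have "rf (qpoch (nat M)) = rf (gauss_binom M N) * (rf (qpoch (nat N)) * rf (qpoch (nat (M - N))))"
    using gauss_poly_qpoch True by (simp add: gauss_binom_def rf_mult[symmetric] mult.assoc)
  moreover have "rf (qpoch (nat N)) * rf (qpoch (nat (M - N))) \<noteq> 0"
    by (simp add: rf_eq_0_iff qpoch_nonzero)
  ultimately show ?thesis using True by (simp add: qbinom_def)
next
  case False
  then show ?thesis by (auto simp: qbinom_def gauss_binom_eq_0 rf_def Zero_fract_def)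
qed

section \<open>Ascents and ballot words\<close>

definition ascents :: "nat list \<Rightarrow> nat set" where
  "ascents w = {m. 1 \<le> m \<and> m < length w \<and> w ! (m - 1) < w ! m}"

definition word_maj :: "nat list \<Rightarrow> nat" where
  "word_maj w = \<Sum>(ascents w)"

lemma finite_ascents [simp]: "finite (ascents w)"
  by (simp add: ascents_def)

lemma ascents_singleton [simp]: "ascents [x] = {}"
  by (simp add: ascents_def)

lemma ascents_Cons:
  assumes "u \<noteq> []"
  shows "ascents (x # u) = (if x < hd u then {1} else {}) \<union> Suc ` ascents u"
proof (intro equalityI subsetI)
  fix m assume m: "m \<in> ascents (x # u)"
  show "m \<in> (if x < hd u then {1} else {}) \<union> Suc ` ascents u"
  proof (cases m)
    case (Suc m')
    with m assms show ?thesis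
      by (cases m') (auto simp: ascents_def hd_conv_nth nth_Cons' image_iff)
  qed (use m in \<open>simp add: ascents_def\<close>)
next
  fix m assume "m \<in> (if x < hd u then {1} else {}) \<union> Suc ` ascents u"
  with assms show "m \<in> ascents (x # u)"
    by (auto simp: ascents_def hd_conv_nth nth_Cons' split: if_splits)
qed

lemma card_ascents_Cons:
  assumes "u \<noteq> []"
  shows "card (ascents (x # u)) = (if x < hd u then 1 else 0) + card (ascents u)"
proof -
  have "1 \<notin> Suc ` ascents u"
    by (auto simp: ascents_def)
  then show ?thesis
    using assms by (simp add: ascents_Cons card_image)
qed

lemma word_maj_Cons:
  assumes "u \<noteq> []"
  shows "word_maj (x # u) = card (ascents (x # u)) + word_maj u"
proof -
  have "\<Sum>(Suc ` ascents u) = (\<Sum>m\<in>ascents u. m + 1)"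
    by (simp add: sum.reindex)
  also have "\<dots> = \<Sum>(ascents u) + card (ascents u)"
    by (subst sum.distrib) simp
  finally have "\<Sum>(Suc ` ascents u) = \<Sum>(ascents u) + card (ascents u)" .
  moreover have "1 \<notin> Suc ` ascents u"
    by (auto simp: ascents_def)
  ultimately show ?thesis
    using assms by (simp add: word_maj_def ascents_Cons card_ascents_Cons card_image)
qed

fun ballot :: "nat \<Rightarrow> nat list \<Rightarrow> bool" where
  "ballot d [] = True"
| "ballot d (x # u) =
    (if x = 0 then ballot (Suc d) u else if x = 1 then 0 < d \<and> ballot (d - 1) u else ballot d u)"

definition ballot_words :: "nat \<Rightarrow> nat \<Rightarrow> nat \<Rightarrow> nat list set" where
  "ballot_words a b d =
     {w. set w \<subseteq> {0, 1} \<and> count_list w 0 = a \<and> count_list w 1 = b \<and> ballot d w}"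

lemma ballot_iff_prefix:
  "ballot d w \<longleftrightarrow> (\<forall>p \<le> length w. count_list (take p w) 1 \<le> count_list (take p w) 0 + d)"
proof (induction w arbitrary: d)
  case (Cons x u)
  have "(\<forall>p \<le> length (x # u). P p) \<longleftrightarrow> P 0 \<and> (\<forall>p \<le> length u. P (Suc p))" for P
    by (metis Suc_le_mono le0 length_Cons not0_implies_Suc)
  with Cons.IH show ?case by auto
qed simp

lemma length_eq_count_list_01:
  "set w \<subseteq> {0, 1} \<Longrightarrow> length w = count_list w 0 + count_list w (1::nat)"
  using sum_count_set[of w "{0::nat, 1}"] by simp

lemma finite_ballot_words: "finite (ballot_words a b d)"
proof (rule finite_subset)
  show "ballot_words a b d \<subseteq> {w. set w \<subseteq> {0, 1} \<and> length w = a + b}"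
    using length_eq_count_list_01 by (fastforce simp: ballot_words_def)
qed (simp add: finite_lists_length_eq)

lemma Nil_in_ballot_words: "[] \<in> ballot_words a b d \<longleftrightarrow> a = 0 \<and> b = 0"
  by (auto simp: ballot_words_def)

lemma Cons_0_in_ballot_words: "0 # u \<in> ballot_words (Suc a) b d \<longleftrightarrow> u \<in> ballot_words a b (Suc d)"
  by (auto simp: ballot_words_def)

lemma Cons_1_in_ballot_words: "1 # u \<in> ballot_words a (Suc b) (Suc d) \<longleftrightarrow> u \<in> ballot_words a b d"
  by (auto simp: ballot_words_def)

definition ballot_gf :: "nat \<Rightarrow> nat \<Rightarrow> nat \<Rightarrow> nat \<Rightarrow> nat \<Rightarrow> int poly" where
  "ballot_gf a b d i x =
     (\<Sum>w | w \<in> ballot_words a b d \<and> w \<noteq> [] \<and> hd w = x \<and> card (ascents w) = i.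
        monom 1 (word_maj w))"

lemma ballot_gf_Cons:
  "ballot_gf a b d i x =
     (\<Sum>u | x # u \<in> ballot_words a b d \<and> card (ascents (x # u)) = i. monom 1 (word_maj (x # u)))"
proof -
  have "{w. w \<in> ballot_words a b d \<and> w \<noteq> [] \<and> hd w = x \<and> card (ascents w) = i}
      = Cons x ` {u. x # u \<in> ballot_words a b d \<and> card (ascents (x # u)) = i}"
    by (auto simp: neq_Nil_conv)
  then show ?thesis
    by (simp add: ballot_gf_def sum.reindex)
qed

lemma sum_Cons_split_Nil:
  assumes "finite U"
  shows "(\<Sum>u | u \<in> U \<and> card (ascents (x # u)) = i. monom 1 (word_maj (x # u)) :: int poly) =
     (if [] \<in> U \<and> i = 0 then 1 else 0)
     + monom 1 i * (\<Sum>u | u \<in> U \<and> u \<noteq> [] \<and> card (ascents (x # u)) = i. monom 1 (word_maj u))"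
proof -
  let ?f = "\<lambda>u. monom 1 (word_maj (x # u)) :: int poly"
  let ?N = "if [] \<in> U \<and> i = 0 then {[]} else {}"
  have "{u. u \<in> U \<and> card (ascents (x # u)) = i}
      = ?N \<union> {u. u \<in> U \<and> u \<noteq> [] \<and> card (ascents (x # u)) = i}"
    by auto
  then have "sum ?f {u. u \<in> U \<and> card (ascents (x # u)) = i}
      = sum ?f ?N + sum ?f {u. u \<in> U \<and> u \<noteq> [] \<and> card (ascents (x # u)) = i}"
    using assms by (simp add: sum.union_disjoint)
  also have "sum ?f ?N = (if [] \<in> U \<and> i = 0 then 1 else 0)"
    by (simp add: word_maj_def)
  also have "sum ?f {u. u \<in> U \<and> u \<noteq> [] \<and> card (ascents (x # u)) = i}
      = monom 1 i * (\<Sum>u | u \<in> U \<and> u \<noteq> [] \<and> card (ascents (x # u)) = i. monom 1 (word_maj u))"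
    by (simp add: sum_distrib_left word_maj_Cons monom_1_mult)
  finally show ?thesis .
qed

lemma sum_split_hd_01:
  fixes U :: "nat list set"
  assumes "finite U" "\<And>u. u \<in> U \<Longrightarrow> set u \<subseteq> {0, 1}"
  shows "(\<Sum>u | u \<in> U \<and> u \<noteq> [] \<and> P u. f u) =
     (\<Sum>u | u \<in> U \<and> u \<noteq> [] \<and> hd u = 0 \<and> P u. f u)
     + (\<Sum>u | u \<in> U \<and> u \<noteq> [] \<and> hd u = 1 \<and> P u. f u)"
proof -
  let ?U0 = "{u. u \<in> U \<and> u \<noteq> [] \<and> hd u = 0 \<and> P u}" and ?U1 = "{u. u \<in> U \<and> u \<noteq> [] \<and> hd u = 1 \<and> P u}"
  have "{u. u \<in> U \<and> u \<noteq> [] \<and> P u} = ?U0 \<union> ?U1"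
    using assms(2) by (fastforce simp: neq_Nil_conv)
  moreover have "sum f (?U0 \<union> ?U1) = sum f ?U0 + sum f ?U1"
    by (rule sum.union_disjoint) (use assms(1) in auto)
  ultimately show ?thesis
    by simp
qed

lemma ballot_gf_0_rec:
  "ballot_gf (Suc a) b d i 0 = (if a = 0 \<and> b = 0 \<and> i = 0 then 1 else 0)
     + monom 1 i * (ballot_gf a b (Suc d) i 0
                    + (if i = 0 then 0 else ballot_gf a b (Suc d) (i - 1) 1))"
proof -
  let ?U = "ballot_words a b (Suc d)"
  have "ballot_gf (Suc a) b d i 0
      = (\<Sum>u | u \<in> ?U \<and> card (ascents (0 # u)) = i. monom 1 (word_maj (0 # u)))"
    unfolding ballot_gf_Cons Cons_0_in_ballot_words ..
  also have "\<dots> = (if a = 0 \<and> b = 0 \<and> i = 0 then 1 else 0) + monom 1 i *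
      (\<Sum>u | u \<in> ?U \<and> u \<noteq> [] \<and> card (ascents (0 # u)) = i. monom 1 (word_maj u))"
    by (simp add: sum_Cons_split_Nil finite_ballot_words Nil_in_ballot_words)
  also have "(\<Sum>u | u \<in> ?U \<and> u \<noteq> [] \<and> card (ascents (0 # u)) = i. monom 1 (word_maj u))
      = (\<Sum>u | u \<in> ?U \<and> u \<noteq> [] \<and> hd u = 0 \<and> card (ascents (0 # u)) = i. monom 1 (word_maj u))
      + (\<Sum>u | u \<in> ?U \<and> u \<noteq> [] \<and> hd u = 1 \<and> card (ascents (0 # u)) = i. monom 1 (word_maj u))"
    by (rule sum_split_hd_01[OF finite_ballot_words]) (auto simp: ballot_words_def)
  also have "(\<Sum>u | u \<in> ?U \<and> u \<noteq> [] \<and> hd u = 0 \<and> card (ascents (0 # u)) = i. monom 1 (word_maj u))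
      = ballot_gf a b (Suc d) i 0"
    unfolding ballot_gf_def by (rule sum.cong) (auto simp: card_ascents_Cons)
  also have "(\<Sum>u | u \<in> ?U \<and> u \<noteq> [] \<and> hd u = 1 \<and> card (ascents (0 # u)) = i. monom 1 (word_maj u))
      = (if i = 0 then 0 else ballot_gf a b (Suc d) (i - 1) 1)"
    unfolding ballot_gf_def
    by (cases i) (auto simp: card_ascents_Cons simp del: card_0_eq cong: conj_cong intro!: sum.cong)
  finally show ?thesis .
qed

lemma ballot_gf_1_rec:
  "ballot_gf a (Suc b) (Suc d) i 1 = (if a = 0 \<and> b = 0 \<and> i = 0 then 1 else 0)
     + monom 1 i * (ballot_gf a b d i 0 + ballot_gf a b d i 1)"
proof -
  let ?U = "ballot_words a b d"
  have "ballot_gf a (Suc b) (Suc d) i 1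
      = (\<Sum>u | u \<in> ?U \<and> card (ascents (1 # u)) = i. monom 1 (word_maj (1 # u)))"
    unfolding ballot_gf_Cons Cons_1_in_ballot_words ..
  also have "\<dots> = (if a = 0 \<and> b = 0 \<and> i = 0 then 1 else 0) + monom 1 i *
      (\<Sum>u | u \<in> ?U \<and> u \<noteq> [] \<and> card (ascents (1 # u)) = i. monom 1 (word_maj u))"
    by (simp add: sum_Cons_split_Nil finite_ballot_words Nil_in_ballot_words)
  also have "(\<Sum>u | u \<in> ?U \<and> u \<noteq> [] \<and> card (ascents (1 # u)) = i. monom 1 (word_maj u))
      = (\<Sum>u | u \<in> ?U \<and> u \<noteq> [] \<and> hd u = 0 \<and> card (ascents (1 # u)) = i. monom 1 (word_maj u))
      + (\<Sum>u | u \<in> ?U \<and> u \<noteq> [] \<and> hd u = 1 \<and> card (ascents (1 # u)) = i. monom 1 (word_maj u))"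
    by (rule sum_split_hd_01[OF finite_ballot_words]) (auto simp: ballot_words_def)
  also have "\<dots> = ballot_gf a b d i 0 + ballot_gf a b d i 1"
    unfolding ballot_gf_def by (intro arg_cong2[where f = "(+)"] sum.cong) (auto simp: card_ascents_Cons)
  finally show ?thesis .
qed

lemma ballot_gf_0_eq_0: "ballot_gf 0 b d i 0 = 0"
proof -
  have empty: "{w. w \<in> ballot_words 0 b d \<and> w \<noteq> [] \<and> hd w = 0 \<and> card (ascents w) = i} = {}"
    by (auto simp: ballot_words_def count_list_0_iff neq_Nil_conv)
  show ?thesis
    unfolding ballot_gf_def empty by simp
qed

lemma ballot_gf_1_eq_0:
  assumes "b = 0 \<or> d = 0"
  shows "ballot_gf a b d i 1 = 0"
proof -
  have empty: "{w. w \<in> ballot_words a b d \<and> w \<noteq> [] \<and> hd w = 1 \<and> card (ascents w) = i} = {}"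
    using assms by (auto simp: ballot_words_def count_list_0_iff neq_Nil_conv)
  show ?thesis
    unfolding ballot_gf_def empty by simp
qed

definition ballot_gf_0_formula :: "nat \<Rightarrow> nat \<Rightarrow> nat \<Rightarrow> nat \<Rightarrow> int poly" where
  "ballot_gf_0_formula a b d i = monom 1 (i\<^sup>2) *
     (gauss_binom (int a) (int i) * gauss_binom (int b - 1) (int i - 1)
      - gauss_binom (int a + int d) (int i - 1) * gauss_binom (int b - int d - 1) (int i))"

definition ballot_gf_1_formula :: "nat \<Rightarrow> nat \<Rightarrow> nat \<Rightarrow> nat \<Rightarrow> int poly" where
  "ballot_gf_1_formula a b d i = monom 1 (i\<^sup>2 + i) *
     (gauss_binom (int a) (int i) * gauss_binom (int b - 1) (int i)
      - gauss_binom (int a + int d) (int i) * gauss_binom (int b - int d - 1) (int i))"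

lemma ballot_gf_0_formula_rec:
  assumes "1 \<le> i"
  shows "monom 1 i * (ballot_gf_0_formula a b (Suc d) i + ballot_gf_1_formula a b (Suc d) (i - 1))
    = ballot_gf_0_formula (Suc a) b d i"
proof -
  obtain i' where i: "i = Suc i'" using assms by (cases i) auto
  \<comment> \<open>Naming the Gaussian binomials keeps \<open>algebra_simps\<close> away from their integer arguments.\<close>
  define g1 where "g1 = gauss_binom (int a) (int i)"
  define g2 where "g2 = gauss_binom (int b - 1) (int i')"
  define g3 where "g3 = gauss_binom (int a + int d + 1) (int i')"
  define g4 where "g4 = gauss_binom (int b - int d - 2) (int i)"
  define g5 where "g5 = gauss_binom (int a) (int i')"
  define g6 where "g6 = gauss_binom (int b - int d - 2) (int i')"
  have int_eqs: "i - 1 = i'" "int i - 1 = int i'" "int (Suc a) + int d = int a + int d + 1"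
    "int a + int (Suc d) = int a + int d + 1" "int b - int (Suc d) - 1 = int b - int d - 2"
    using i by auto
  have pascal_a: "gauss_binom (int (Suc a)) (int i) = g5 + monom 1 i * g1"
    using gauss_binom_pascal[of "int (Suc a)" i'] by (simp add: g1_def g5_def i)
  have pascal_b: "gauss_binom (int b - int d - 1) (int i) = g6 + monom 1 i * g4"
    using gauss_binom_pascal[of "int b - int d - 1" i'] by (simp add: g4_def g6_def i)
  have square: "monom 1 (i\<^sup>2) = monom (1::int) i * monom 1 (i'\<^sup>2 + i')"
    by (simp add: monom_1_mult i power2_eq_square algebra_simps)
  show ?thesis
    unfolding ballot_gf_0_formula_def ballot_gf_1_formula_def int_eqs pascal_a pascal_b square
      i[symmetric] g1_def[symmetric] g2_def[symmetric] g3_def[symmetric] g4_def[symmetric]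
      g5_def[symmetric] g6_def[symmetric]
    by (simp add: algebra_simps)
qed

lemma ballot_gf_1_formula_rec:
  assumes "1 \<le> i"
  shows "monom 1 i * (ballot_gf_0_formula a b d i + ballot_gf_1_formula a b d i)
    = ballot_gf_1_formula a (Suc b) (Suc d) i"
proof -
  obtain i' where i: "i = Suc i'" using assms by (cases i) auto
  define h1 where "h1 = gauss_binom (int a) (int i)"
  define h2 where "h2 = gauss_binom (int b - 1) (int i - 1)"
  define h3 where "h3 = gauss_binom (int a + int d) (int i - 1)"
  define h4 where "h4 = gauss_binom (int b - int d - 1) (int i)"
  define h5 where "h5 = gauss_binom (int b - 1) (int i)"
  define h6 where "h6 = gauss_binom (int a + int d) (int i)"
  have pascal_b: "gauss_binom (int (Suc b) - 1) (int i) = h2 + monom 1 i * h5"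
    using gauss_binom_pascal[of "int (Suc b) - 1" i'] by (simp add: h2_def h5_def i)
  have pascal_ad: "gauss_binom (int a + int (Suc d)) (int i) = h3 + monom 1 i * h6"
    using gauss_binom_pascal[of "int a + int (Suc d)" i'] by (simp add: h3_def h6_def i)
  have int_eq: "int (Suc b) - int (Suc d) - 1 = int b - int d - 1"
    by simp
  show ?thesis
    unfolding ballot_gf_0_formula_def ballot_gf_1_formula_def pascal_b pascal_ad int_eq
      h1_def[symmetric] h2_def[symmetric] h3_def[symmetric] h4_def[symmetric]
      h5_def[symmetric] h6_def[symmetric] monom_1_mult[symmetric]
    by (simp add: algebra_simps)
qed

lemma ballot_gf_0_formula_eq_0: "1 \<le> i \<Longrightarrow> b \<le> d \<Longrightarrow> ballot_gf_0_formula 0 b d i = 0"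
  by (simp add: ballot_gf_0_formula_def gauss_binom_eq_0)

lemma ballot_gf_1_formula_eq_0: "b = 0 \<or> d = 0 \<Longrightarrow> ballot_gf_1_formula a b d i = 0"
  by (auto simp: ballot_gf_1_formula_def gauss_binom_eq_0)

lemma ballot_gf_0_no_ascents: "ballot_gf a b d 0 0 = (if b = 0 \<and> 1 \<le> a then 1 else 0)"
proof (induction a arbitrary: d)
  case 0
  then show ?case by (simp add: ballot_gf_0_eq_0)
next
  case (Suc a)
  then show ?case by (simp add: ballot_gf_0_rec)
qed

lemma ballot_gf_1_no_ascents: "ballot_gf a b d 0 1 = ballot_gf_1_formula a b d 0"
proof (induction b arbitrary: d)
  case 0
  show ?case
    using ballot_gf_1_eq_0[of 0 d a 0] ballot_gf_1_formula_eq_0[of 0 d a 0] by simp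
next
  case (Suc b)
  show ?case
  proof (cases d)
    case 0
    then show ?thesis
      using ballot_gf_1_eq_0[of "Suc b" d a 0] ballot_gf_1_formula_eq_0[of "Suc b" d a 0] by simp
  next
    case (Suc d')
    with Suc.IH[of d'] ballot_gf_1_rec[of a b d' 0] show ?thesis
      by (simp add: ballot_gf_0_no_ascents ballot_gf_1_formula_def gauss_binom_0_right)
  qed
qed

lemma ballot_gf_eq_formula:
  assumes "b \<le> a + d"
  shows "(1 \<le> i \<longrightarrow> ballot_gf a b d i 0 = ballot_gf_0_formula a b d i)
    \<and> ballot_gf a b d i 1 = ballot_gf_1_formula a b d i"
  using assms
proof (induction "a + b" arbitrary: a b d i rule: less_induct)
  case less
  have gf0: "ballot_gf a b d i 0 = ballot_gf_0_formula a b d i" if "1 \<le> i"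
  proof (cases a)
    case 0
    with less.prems that show ?thesis
      by (simp add: ballot_gf_0_eq_0 ballot_gf_0_formula_eq_0)
  next
    case (Suc a')
    with less.prems have "a' + b < a + b" "b \<le> a' + Suc d" by simp_all
    note IH = less.hyps[OF this]
    have "ballot_gf a b d i 0 = monom 1 i * (ballot_gf a' b (Suc d) i 0 + ballot_gf a' b (Suc d) (i - 1) 1)"
      using that by (simp add: Suc ballot_gf_0_rec)
    also have "\<dots> = monom 1 i * (ballot_gf_0_formula a' b (Suc d) i + ballot_gf_1_formula a' b (Suc d) (i - 1))"
      using IH that by simp
    also have "\<dots> = ballot_gf_0_formula a b d i"
      unfolding Suc using that by (rule ballot_gf_0_formula_rec)
    finally show ?thesis .
  qed
  have gf1: "ballot_gf a b d i 1 = ballot_gf_1_formula a b d i"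
  proof (cases "i = 0 \<or> b = 0 \<or> d = 0")
    case True
    then show ?thesis
      using ballot_gf_1_no_ascents[of a b d] ballot_gf_1_eq_0[of b d a i]
        ballot_gf_1_formula_eq_0[of b d a i] by auto
  next
    case False
    then obtain b' d' where bd: "b = Suc b'" "d = Suc d'" "1 \<le> i"
      by (auto simp: gr0_conv_Suc)
    with less.prems have "a + b' < a + b" "b' \<le> a + d'" by simp_all
    note IH = less.hyps[OF this]
    have "ballot_gf a b d i 1 = monom 1 i * (ballot_gf a b' d' i 0 + ballot_gf a b' d' i 1)"
      using ballot_gf_1_rec[of a b' d' i] bd by simp
    also have "\<dots> = monom 1 i * (ballot_gf_0_formula a b' d' i + ballot_gf_1_formula a b' d' i)"
      using IH bd by simp
    also have "\<dots> = ballot_gf_1_formula a b d i"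
      unfolding bd using bd(3) by (rule ballot_gf_1_formula_rec)
    finally show ?thesis .
  qed
  from gf0 gf1 show ?case by blast
qed

section \<open>The reading word of a two-row skew tableau\<close>

text \<open>Position, counted from 1, of the \<open>t\<close>-th occurrence of \<open>r\<close> in a list.\<close>
fun nth_occ :: "'a \<Rightarrow> nat \<Rightarrow> 'a list \<Rightarrow> nat" where
  "nth_occ r t [] = 0"
| "nth_occ r t (x # xs) =
    (if x = r then (if t \<le> 1 then 1 else Suc (nth_occ r (t - 1) xs)) else Suc (nth_occ r t xs))"

lemma nth_occ_pos: "1 \<le> t \<Longrightarrow> t \<le> count_list w r \<Longrightarrow> 0 < nth_occ r t w"
  by (induction w arbitrary: t) auto

lemma nth_occ_le_length: "nth_occ r t w \<le> length w"
  by (induction w arbitrary: t) auto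

lemma nth_nth_occ: "1 \<le> t \<Longrightarrow> t \<le> count_list w r \<Longrightarrow> w ! (nth_occ r t w - 1) = r"
  by (induction w arbitrary: t) (auto simp: nth_Cons' nth_occ_pos)

lemma count_list_take_nth_occ:
  "1 \<le> t \<Longrightarrow> t \<le> count_list w r \<Longrightarrow> count_list (take (nth_occ r t w) w) r = t"
  by (induction w arbitrary: t) auto

lemma nth_occ_strict_mono:
  "1 \<le> t \<Longrightarrow> t < t' \<Longrightarrow> t' \<le> count_list w r \<Longrightarrow> nth_occ r t w < nth_occ r t' w"
  by (induction w arbitrary: t t') (auto simp: nth_occ_pos)

lemma nth_occ_le: "1 \<le> t \<Longrightarrow> t \<le> count_list (take p w) r \<Longrightarrow> nth_occ r t w \<le> p"
proof (induction w arbitrary: t p)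
  case (Cons x w)
  then obtain p' where "p = Suc p'"
    by (cases p) auto
  with Cons.prems Cons.IH[of "t - 1" p'] Cons.IH[of t p'] show ?case
    by auto
qed simp

lemma nth_occ_count_list_take:
  "1 \<le> p \<Longrightarrow> p \<le> length w \<Longrightarrow> w ! (p - 1) = r \<Longrightarrow> nth_occ r (count_list (take p w) r) w = p"
proof (induction w arbitrary: p)
  case (Cons x w)
  show ?case
  proof (cases "p = 1")
    case False
    with Cons.prems obtain p' where p: "p = Suc p'" "1 \<le> p'" "p' \<le> length w" "w ! (p' - 1) = r"
      by (cases p) (auto simp: nth_Cons')
    then have "take p' w = take (p' - 1) w @ [r]"
      using take_Suc_conv_app_nth[of "p' - 1" w] by simp
    with Cons.IH[OF p(2-4)] p show ?thesis
      by simp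
  qed (use Cons.prems in simp)
qed simp

lemma nth_occ_inj:
  assumes "1 \<le> t" "t \<le> count_list w r" "1 \<le> t'" "t' \<le> count_list w r'"
    and "nth_occ r t w = nth_occ r' t' w"
  shows "r = r' \<and> t = t'"
proof
  show "r = r'"
    using nth_nth_occ[OF assms(1,2)] nth_nth_occ[OF assms(3,4)] assms(5) by simp
  with assms show "t = t'"
    by (metis linorder_neqE_nat nth_occ_strict_mono less_irrefl)
qed

lemma mem_skew_cells_iff:
  "(r, c) \<in> skew_cells n k j \<longleftrightarrow> (r = 0 \<and> j < c \<and> c \<le> n) \<or> (r = 1 \<and> 1 \<le> c \<and> c \<le> k)"
  by (auto simp: skew_cells_def)

lemma finite_skew_cells: "finite (skew_cells n k j)"
proof (rule finite_subset)
  show "skew_cells n k j \<subseteq> {0..1} \<times> {0..n + k}"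
    by (auto simp: skew_cells_def)
qed simp

lemma skew_syt_bij: "T \<in> skew_syt n k j \<Longrightarrow> bij_betw T (skew_cells n k j) {1..n + k - j}"
  by (simp add: skew_syt_def)

lemma skew_syt_range: "T \<in> skew_syt n k j \<Longrightarrow> x \<in> skew_cells n k j \<Longrightarrow> 1 \<le> T x \<and> T x \<le> n + k - j"
  using skew_syt_bij by (fastforce simp: bij_betw_def)

lemma skew_syt_obtain_cell:
  assumes "T \<in> skew_syt n k j" "1 \<le> m" "m \<le> n + k - j"
  obtains x where "x \<in> skew_cells n k j" "T x = m"
proof -
  have "m \<in> T ` skew_cells n k j"
    using skew_syt_bij[OF assms(1)] assms(2,3) by (simp add: bij_betw_def)
  with that show ?thesis
    by blast
qed

lemma skew_syt_outside: "T \<in> skew_syt n k j \<Longrightarrow> x \<notin> skew_cells n k j \<Longrightarrow> T x = 0"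
  by (cases x) (simp add: skew_syt_def)

lemma skew_syt_row_mono:
  "T \<in> skew_syt n k j \<Longrightarrow> (r, c) \<in> skew_cells n k j \<Longrightarrow> (r, c') \<in> skew_cells n k j \<Longrightarrow> c < c'
    \<Longrightarrow> T (r, c) < T (r, c')"
  by (simp add: skew_syt_def)

lemma skew_syt_col_mono:
  "T \<in> skew_syt n k j \<Longrightarrow> (0, c) \<in> skew_cells n k j \<Longrightarrow> (1, c) \<in> skew_cells n k j
    \<Longrightarrow> T (0, c) < T (1, c)"
  by (simp add: skew_syt_def)

lemma entry_row_eq:
  assumes "T \<in> skew_syt n k j" "x \<in> skew_cells n k j"
  shows "entry_row n k j T (T x) = fst x"
proof -
  have "inj_on T (skew_cells n k j)"
    using skew_syt_bij[OF assms(1)] by (simp add: bij_betw_def)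
  then have "(THE y. y \<in> skew_cells n k j \<and> T y = T x) = x"
    using assms(2) by (auto dest: inj_onD)
  then show ?thesis
    by (simp add: entry_row_def)
qed

definition reading_word :: "nat \<Rightarrow> nat \<Rightarrow> nat \<Rightarrow> ((nat \<times> nat) \<Rightarrow> nat) \<Rightarrow> nat list" where
  "reading_word n k j T = map (entry_row n k j T) [1..<Suc (n + k - j)]"

lemma length_reading_word [simp]: "length (reading_word n k j T) = n + k - j"
  by (simp add: reading_word_def del: upt_Suc)

lemma nth_reading_word: "m < n + k - j \<Longrightarrow> reading_word n k j T ! m = entry_row n k j T (Suc m)"
  by (simp add: reading_word_def del: upt_Suc)

lemma descents_eq_ascents_reading_word: "descents n k j T = ascents (reading_word n k j T)"
  by (auto simp: descents_def ascents_def nth_reading_word)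

definition row_offset :: "nat \<Rightarrow> nat \<Rightarrow> nat" where
  "row_offset j r = (if r = 0 then j else 0)"

text \<open>The inverse of the reading word: the \<open>t\<close>-th cell of row \<open>r\<close> receives the position of the
  \<open>t\<close>-th letter \<open>r\<close>.\<close>
definition tableau_of_word :: "nat \<Rightarrow> nat \<Rightarrow> nat \<Rightarrow> nat list \<Rightarrow> (nat \<times> nat) \<Rightarrow> nat" where
  "tableau_of_word n k j w x =
     (if x \<in> skew_cells n k j then nth_occ (fst x) (snd x - row_offset j (fst x)) w else 0)"

lemma row_offset_less: "(r, c) \<in> skew_cells n k j \<Longrightarrow> row_offset j r < c"
  by (auto simp: mem_skew_cells_iff row_offset_def)

context
  fixes n k j :: nat
  assumes k_le_n: "k \<le> n" and j_le_n: "j \<le> n"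
begin

lemma set_reading_word: "T \<in> skew_syt n k j \<Longrightarrow> set (reading_word n k j T) \<subseteq> {0, 1}"
proof
  fix v assume T: "T \<in> skew_syt n k j" and "v \<in> set (reading_word n k j T)"
  then obtain m where m: "m < n + k - j" "v = reading_word n k j T ! m"
    by (auto simp: in_set_conv_nth)
  obtain x where x: "x \<in> skew_cells n k j" "T x = Suc m"
    using skew_syt_obtain_cell[OF T, of "Suc m"] m by auto
  then have "v = fst x"
    using m nth_reading_word entry_row_eq[OF T x(1)] by simp
  with x(1) show "v \<in> {0, 1}"
    by (cases x) (auto simp: mem_skew_cells_iff)
qed

lemma count_list_take_reading_word:
  assumes T: "T \<in> skew_syt n k j"
  shows "p \<le> n + k - j \<Longrightarrow>
    count_list (take p (reading_word n k j T)) r = card {x \<in> skew_cells n k j. fst x = r \<and> T x \<le> p}"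
proof (induction p)
  case 0
  have "{x \<in> skew_cells n k j. fst x = r \<and> T x \<le> 0} = {}"
    using skew_syt_range[OF T] by fastforce
  then show ?case
    by (metis card.empty take_0 count_list.simps(1))
next
  case (Suc p)
  let ?w = "reading_word n k j T" and ?A = "\<lambda>p. {x \<in> skew_cells n k j. fst x = r \<and> T x \<le> p}"
  obtain x0 where x0: "x0 \<in> skew_cells n k j" "T x0 = Suc p"
    using skew_syt_obtain_cell[OF T, of "Suc p"] Suc.prems by auto
  have "inj_on T (skew_cells n k j)"
    using skew_syt_bij[OF T] by (simp add: bij_betw_def)
  with x0 have x0_unique: "x = x0" if "x \<in> skew_cells n k j" "T x = Suc p" for x
    using that inj_onD[of T "skew_cells n k j" x x0] by simp
  have "?A (Suc p) = ?A p \<union> (if fst x0 = r then {x0} else {})"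
  proof (intro equalityI subsetI)
    fix x assume "x \<in> ?A (Suc p)"
    then show "x \<in> ?A p \<union> (if fst x0 = r then {x0} else {})"
      using x0_unique[of x] by (cases "T x = Suc p") auto
  qed (use x0 in \<open>auto split: if_splits\<close>)
  moreover have "take (Suc p) ?w = take p ?w @ [fst x0]"
    using Suc.prems nth_reading_word[of p] entry_row_eq[OF T x0(1)] x0(2)
    by (simp add: take_Suc_conv_app_nth)
  moreover have "finite (?A p)" "x0 \<notin> ?A p"
    using finite_skew_cells x0(2) by auto
  ultimately show ?case
    using Suc by simp
qed

lemma count_list_reading_word:
  assumes T: "T \<in> skew_syt n k j"
  shows "count_list (reading_word n k j T) r = card {x \<in> skew_cells n k j. fst x = r}"
proof -
  have "{x \<in> skew_cells n k j. fst x = r \<and> T x \<le> n + k - j} = {x \<in> skew_cells n k j. fst x = r}"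
    using skew_syt_range[OF T] by auto
  with count_list_take_reading_word[OF T, of "n + k - j" r] show ?thesis
    by simp
qed

lemma card_row_prefix:
  assumes T: "T \<in> skew_syt n k j" and rc: "(r, c) \<in> skew_cells n k j"
  shows "card {y \<in> skew_cells n k j. fst y = r \<and> T y \<le> T (r, c)} = c - row_offset j r"
proof -
  have "{y \<in> skew_cells n k j. fst y = r \<and> T y \<le> T (r, c)} = Pair r ` {row_offset j r <.. c}"
  proof (intro equalityI subsetI)
    fix y assume y: "y \<in> {y \<in> skew_cells n k j. fst y = r \<and> T y \<le> T (r, c)}"
    then obtain c' where c': "y = (r, c')" "(r, c') \<in> skew_cells n k j"
      by (cases y) auto
    with y have "\<not> c < c'"
      using skew_syt_row_mono[OF T rc c'(2)] by auto
    with c' show "y \<in> Pair r ` {row_offset j r <.. c}"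
      using row_offset_less by auto
  next
    fix y assume "y \<in> Pair r ` {row_offset j r <.. c}"
    then obtain c' where c': "y = (r, c')" "row_offset j r < c'" "c' \<le> c"
      by auto
    then have "(r, c') \<in> skew_cells n k j"
      using rc by (auto simp: mem_skew_cells_iff row_offset_def)
    moreover have "T (r, c') \<le> T (r, c)"
      using skew_syt_row_mono[OF T calculation rc] c' by (cases "c' = c") auto
    ultimately show "y \<in> {y \<in> skew_cells n k j. fst y = r \<and> T y \<le> T (r, c)}"
      using c' by auto
  qed
  then show ?thesis
    by (simp add: card_image inj_on_def)
qed

lemma card_top_row: "card {x \<in> skew_cells n k j. fst x = 0} = n - j"
proof -
  have "{x \<in> skew_cells n k j. fst x = 0} = Pair 0 ` {j<..n}"
    by (auto simp: skew_cells_def)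
  then show ?thesis
    by (simp add: card_image inj_on_def)
qed

lemma card_bottom_row: "card {x \<in> skew_cells n k j. fst x = 1} = k"
proof -
  have "{x \<in> skew_cells n k j. fst x = 1} = Pair 1 ` {1..k}"
    by (auto simp: skew_cells_def)
  then show ?thesis
    by (simp add: card_image inj_on_def)
qed

text \<open>Among the entries \<open>\<le> p\<close>, a bottom cell in a column \<open>c > j\<close> lies below a top cell with a smaller
  entry, so the bottom row contains at most \<open>j\<close> more of them than the top row.\<close>
lemma reading_word_ballot:
  assumes T: "T \<in> skew_syt n k j" and p: "p \<le> n + k - j"
  shows "count_list (take p (reading_word n k j T)) 1 \<le> count_list (take p (reading_word n k j T)) 0 + j"
proof -
  define B where "B r = {x \<in> skew_cells n k j. fst x = r \<and> T x \<le> p}" for r :: nat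
  have finite_B: "finite (B r)" for r
    using finite_skew_cells by (simp add: B_def)
  have "B 1 \<subseteq> Pair 1 ` {1..j} \<union> {x \<in> B 1. j < snd x}"
    by (auto simp: B_def skew_cells_def)
  then have "card (B 1) \<le> card (Pair 1 ` {1..j} \<union> {x \<in> B 1. j < snd x})"
    using finite_B by (intro card_mono) auto
  also have "\<dots> \<le> card (Pair (1::nat) ` {1..j}) + card {x \<in> B 1. j < snd x}"
    by (rule card_Un_le)
  also have "card (Pair (1::nat) ` {1..j}) = j"
    by (simp add: card_image inj_on_def)
  also have "card {x \<in> B 1. j < snd x} \<le> card (B 0)"
  proof (rule card_inj_on_le[OF _ _ finite_B])
    show "inj_on (\<lambda>x. (0, snd x)) {x \<in> B 1. j < snd x}"
      by (auto simp: inj_on_def B_def prod_eq_iff)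
    show "(\<lambda>x. (0, snd x)) ` {x \<in> B 1. j < snd x} \<subseteq> B 0"
    proof clarify
      fix r c assume "(r, c) \<in> B 1" "j < snd (r, c)"
      then have bottom: "(1, c) \<in> skew_cells n k j" "T (1, c) \<le> p" and "j < c"
        by (auto simp: B_def)
      then have top: "(0, c) \<in> skew_cells n k j"
        using k_le_n by (auto simp: mem_skew_cells_iff)
      with bottom show "(0, snd (r, c)) \<in> B 0"
        using skew_syt_col_mono[OF T top bottom(1)] by (auto simp: B_def)
    qed
  qed
  finally show ?thesis
    unfolding count_list_take_reading_word[OF T p] B_def by simp
qed

lemma reading_word_in_ballot_words:
  "T \<in> skew_syt n k j \<Longrightarrow> reading_word n k j T \<in> ballot_words (n - j) k j"
  unfolding ballot_words_def ballot_iff_prefix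
  using set_reading_word count_list_reading_word card_top_row card_bottom_row reading_word_ballot
  by auto

lemma tableau_of_reading_word:
  assumes T: "T \<in> skew_syt n k j"
  shows "tableau_of_word n k j (reading_word n k j T) = T"
proof
  fix x
  let ?w = "reading_word n k j T"
  show "tableau_of_word n k j ?w x = T x"
  proof (cases "x \<in> skew_cells n k j")
    case True
    obtain r c where x: "x = (r, c)"
      by (cases x)
    have range: "1 \<le> T x" "T x \<le> n + k - j"
      using skew_syt_range[OF T True] by auto
    then have "?w ! (T x - 1) = r"
      using nth_reading_word[of "T x - 1"] entry_row_eq[OF T True] x by simp
    with range have "nth_occ r (count_list (take (T x) ?w) r) ?w = T x"
      by (intro nth_occ_count_list_take) auto
    moreover have "count_list (take (T x) ?w) r = c - row_offset j r"
      using count_list_take_reading_word[OF T range(2)] card_row_prefix[OF T] True x by simp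
    ultimately show ?thesis
      using True x by (simp add: tableau_of_word_def)
  qed (simp add: tableau_of_word_def skew_syt_outside[OF T])
qed

lemma length_ballot_word: "w \<in> ballot_words (n - j) k j \<Longrightarrow> length w = n + k - j"
  using length_eq_count_list_01[of w] j_le_n by (auto simp: ballot_words_def)

lemma tableau_of_word_index_range:
  assumes "w \<in> ballot_words (n - j) k j" "(r, c) \<in> skew_cells n k j"
  shows "1 \<le> c - row_offset j r" "c - row_offset j r \<le> count_list w r"
  using assms by (auto simp: ballot_words_def mem_skew_cells_iff row_offset_def)

lemma tableau_of_word_inj:
  assumes w: "w \<in> ballot_words (n - j) k j"
  shows "inj_on (tableau_of_word n k j w) (skew_cells n k j)"
proof (rule inj_onI)
  fix x y
  assume x: "x \<in> skew_cells n k j" and y: "y \<in> skew_cells n k j"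
    and eq: "tableau_of_word n k j w x = tableau_of_word n k j w y"
  obtain r c r' c' where xy: "x = (r, c)" "y = (r', c')"
    by fastforce
  have "r = r' \<and> c - row_offset j r = c' - row_offset j r'"
  proof (rule nth_occ_inj)
    show "nth_occ r (c - row_offset j r) w = nth_occ r' (c' - row_offset j r') w"
      using x y eq xy by (simp add: tableau_of_word_def)
  qed (use tableau_of_word_index_range[OF w] x y xy in auto)
  moreover have "row_offset j r < c" "row_offset j r' < c'"
    using row_offset_less x y xy by auto
  ultimately show "x = y"
    using xy by auto
qed

lemma tableau_of_word_obtain_cell:
  assumes w: "w \<in> ballot_words (n - j) k j" and p: "1 \<le> p" "p \<le> n + k - j"
  obtains x where "x \<in> skew_cells n k j" "fst x = w ! (p - 1)" "tableau_of_word n k j w x = p"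
proof -
  let ?r = "w ! (p - 1)"
  let ?t = "count_list (take p w) ?r"
  have len: "p - 1 < length w"
    using p length_ballot_word[OF w] by simp
  then have r01: "?r = 0 \<or> ?r = 1"
    using w nth_mem by (fastforce simp: ballot_words_def)
  have "take p w = take (p - 1) w @ [?r]"
    using take_Suc_conv_app_nth[OF len] p by simp
  then have "1 \<le> ?t"
    by simp
  moreover have "?t \<le> count_list w ?r"
    by (metis append_take_drop_id count_list_append le_add1)
  ultimately have cell: "(?r, ?t + row_offset j ?r) \<in> skew_cells n k j"
    using r01 w k_le_n by (auto simp: ballot_words_def mem_skew_cells_iff row_offset_def)
  have "tableau_of_word n k j w (?r, ?t + row_offset j ?r) = p"
    using cell nth_occ_count_list_take[of p w ?r] p len by (simp add: tableau_of_word_def)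
  with cell that show ?thesis
    by simp
qed

lemma tableau_of_word_image:
  assumes w: "w \<in> ballot_words (n - j) k j"
  shows "tableau_of_word n k j w ` skew_cells n k j = {1..n + k - j}"
proof (intro equalityI subsetI)
  fix v assume "v \<in> tableau_of_word n k j w ` skew_cells n k j"
  then obtain r c where x: "(r, c) \<in> skew_cells n k j" "v = tableau_of_word n k j w (r, c)"
    by auto
  then show "v \<in> {1..n + k - j}"
    using nth_occ_pos[OF tableau_of_word_index_range[OF w x(1)]]
      nth_occ_le_length[of r "c - row_offset j r" w] length_ballot_word[OF w]
    by (simp add: tableau_of_word_def Suc_le_eq)
next
  fix p assume "p \<in> {1..n + k - j}"
  then show "p \<in> tableau_of_word n k j w ` skew_cells n k j"
    using tableau_of_word_obtain_cell[OF w, of p] by (metis atLeastAtMost_iff image_eqI)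
qed

lemma tableau_of_word_row_mono:
  assumes w: "w \<in> ballot_words (n - j) k j"
    and cells: "(r, c) \<in> skew_cells n k j" "(r, c') \<in> skew_cells n k j" and "c < c'"
  shows "tableau_of_word n k j w (r, c) < tableau_of_word n k j w (r, c')"
proof -
  have "c - row_offset j r < c' - row_offset j r"
    using \<open>c < c'\<close> row_offset_less[OF cells(1)] by simp
  then show ?thesis
    using nth_occ_strict_mono[OF tableau_of_word_index_range(1)[OF w cells(1)] _
        tableau_of_word_index_range(2)[OF w cells(2)]] cells
    by (simp add: tableau_of_word_def)
qed

text \<open>The \<open>c\<close>-th letter \<open>1\<close> sits at position \<open>p\<close>; the ballot condition on the prefix of length \<open>p\<close>
  puts at least \<open>c - j\<close> letters \<open>0\<close> before it.\<close>
lemma tableau_of_word_col_mono: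
  assumes w: "w \<in> ballot_words (n - j) k j"
    and cells: "(0, c) \<in> skew_cells n k j" "(1, c) \<in> skew_cells n k j"
  shows "tableau_of_word n k j w (0, c) < tableau_of_word n k j w (1, c)"
proof -
  have t1: "1 \<le> c" "c \<le> count_list w 1" and t0: "1 \<le> c - j" "c - j \<le> count_list w 0"
    using tableau_of_word_index_range[OF w cells(2)] tableau_of_word_index_range[OF w cells(1)]
    by (simp_all add: row_offset_def)
  define p where "p = nth_occ 1 c w"
  have "p \<le> length w"
    using nth_occ_le_length by (simp add: p_def)
  then have "count_list (take p w) 1 \<le> count_list (take p w) 0 + j"
    using w by (auto simp: ballot_words_def ballot_iff_prefix)
  then have "c - j \<le> count_list (take p w) 0"
    using count_list_take_nth_occ[OF t1] by (simp add: p_def)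
  then have "nth_occ 0 (c - j) w \<le> p"
    by (rule nth_occ_le[OF t0(1)])
  moreover have "nth_occ 0 (c - j) w \<noteq> p"
    using nth_nth_occ[OF t0] nth_nth_occ[OF t1] by (auto simp: p_def)
  ultimately show ?thesis
    using cells by (simp add: tableau_of_word_def row_offset_def p_def)
qed

lemma tableau_of_word_in_skew_syt:
  assumes w: "w \<in> ballot_words (n - j) k j"
  shows "tableau_of_word n k j w \<in> skew_syt n k j"
  using tableau_of_word_inj[OF w] tableau_of_word_image[OF w]
    tableau_of_word_row_mono[OF w] tableau_of_word_col_mono[OF w]
  by (auto simp: skew_syt_def bij_betw_def tableau_of_word_def)

lemma reading_word_tableau_of_word:
  assumes w: "w \<in> ballot_words (n - j) k j"
  shows "reading_word n k j (tableau_of_word n k j w) = w"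
proof (rule nth_equalityI)
  show "length (reading_word n k j (tableau_of_word n k j w)) = length w"
    using length_ballot_word[OF w] by simp
next
  fix m assume "m < length (reading_word n k j (tableau_of_word n k j w))"
  then have m: "m < n + k - j"
    by simp
  then obtain x where "x \<in> skew_cells n k j" "fst x = w ! m" "tableau_of_word n k j w x = Suc m"
    using tableau_of_word_obtain_cell[OF w, of "Suc m"] by auto
  then show "reading_word n k j (tableau_of_word n k j w) ! m = w ! m"
    using nth_reading_word[OF m] entry_row_eq[OF tableau_of_word_in_skew_syt[OF w]] by metis
qed

lemma bij_betw_reading_word:
  "bij_betw (reading_word n k j) (skew_syt n k j) (ballot_words (n - j) k j)"
  by (rule bij_betw_byWitness[where f' = "tableau_of_word n k j"])
    (use tableau_of_reading_word reading_word_tableau_of_word reading_word_in_ballot_words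
      tableau_of_word_in_skew_syt in auto)

lemma fstar_eq_ballot_gf:
  assumes "1 \<le> k"
  shows "fstar n k j i = ballot_gf (n - j) k j i 0"
proof -
  have "0 < n + k - j"
    using assms j_le_n by simp
  then have "reading_word n k j T \<noteq> [] \<and> hd (reading_word n k j T) = entry_row n k j T 1" for T
    using nth_reading_word[of 0 n k j T] by (simp add: hd_conv_nth flip: length_greater_0_conv)
  then have "bij_betw (reading_word n k j)
      {T \<in> skew_syt n k j. card (descents n k j T) = i \<and> entry_row n k j T 1 = 0}
      {w \<in> ballot_words (n - j) k j. w \<noteq> [] \<and> hd w = 0 \<and> card (ascents w) = i}"
    by (intro bij_betw_Collect[OF bij_betw_reading_word]) (auto simp: descents_eq_ascents_reading_word)
  then show ?thesis
    unfolding fstar_def ballot_gf_def maj_def descents_eq_ascents_reading_word word_maj_def[symmetric]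
    by (rule sum.reindex_bij_betw)
qed

end

theorem mainTheorem4:
  fixes n k j i :: nat
  assumes "n \<ge> k" and "k \<ge> 1" and "j < n" and "i \<ge> 1"
  shows "rf (fstar n k j i) =
    rf (monom 1 (i ^ 2)) *
      (qbinom (int n - int j) (int i) * qbinom (int k - 1) (int i - 1)
       - qbinom (int n) (int i - 1) * qbinom (int k - int j - 1) (int i))"
proof -
  have "fstar n k j i = ballot_gf (n - j) k j i 0"
    using fstar_eq_ballot_gf assms by simp
  also have "\<dots> = ballot_gf_0_formula (n - j) k j i"
    using ballot_gf_eq_formula[of k "n - j" j i] assms by simp
  finally show ?thesis
    using assms by (simp add: ballot_gf_0_formula_def qbinom_eq_gauss_binom rf_mult rf_diff)
qed

end
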